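(* Let $t_*<t^*$ and $T=[t_*,t^*]$. Suppose $q$ is non-decreasing and $p$ is continuous and strictly increasing on some open interval containing $T$, and let $p^{-1}$ denote the inverse of $p$. Suppose that for some $j_0$ the sequence defined by $t_1=t_*$ and $t_{j+1}=p^{-1}(q(t_j))$, $j=1,\dots,j_0-1$, is well defined, strictly increasing, and satisfies $t_{j_0}>t^*>t_{j_0-1}$. Then $q(t)>p(t)$ for all $t\in T$. *)

theory Defs
  imports "HOL-Analysis.Analysis"
begin

end

theory Submission
  imports Defs
begin

text \<open>For \<open>x \<in> [t\<^sub>*, t\<^sup>*]\<close> pick \<open>j < j\<^sub>0\<close> with \<open>t\<^sub>j \<le> x < t\<^sub>j\<^sub>+\<^sub>1\<close>; then
  \<open>p(x) < p(t\<^sub>j\<^sub>+\<^sub>1) = q(t\<^sub>j) \<le> q(x)\<close>.\<close>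

lemma ex_index_between_consecutive:
  fixes t :: "nat \<Rightarrow> 'a::linorder"
  assumes "m < n" and "t m \<le> x" and "x < t n"
  shows "\<exists>j. m \<le> j \<and> j < n \<and> t j \<le> x \<and> x < t (Suc j)"
  using assms
proof (induction n rule: less_induct)
  case (less n)
  then obtain k where n: "n = Suc k" and "m \<le> k"
    by (metis less_Suc_eq_le lessE)
  show ?case
  proof (cases "x < t k")
    case True
    have "m < k"
      using \<open>m \<le> k\<close> True less.prems(2) by (metis le_neq_implies_less not_less)
    with less.IH[of k] True n less.prems(2) show ?thesis
      by (metis less_SucI lessI)
  next
    case False
    then show ?thesis
      using n \<open>m \<le> k\<close> less.prems(3) by (intro exI[of _ k]) auto
  qed
qed

theorem lemma2p1:
  fixes t :: "nat \<Rightarrow> real" and p q :: "real \<Rightarrow> real"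
  fixes tlo thi :: real and I :: "real set" and j0 :: nat
  assumes "tlo < thi"
    and "open I" and "is_interval I" and "{tlo..thi} \<subseteq> I"
    and "mono_on I q"
    and "continuous_on I p" and "strict_mono_on I p"
    and "t 1 = tlo"
    and "\<forall>j. 1 \<le> j \<and> j < j0 \<longrightarrow>
           q (t j) \<in> p ` I \<and> t (Suc j) = the_inv_into I p (q (t j))"
    and "\<forall>j. 1 \<le> j \<and> j < j0 \<longrightarrow> t j < t (Suc j)"
    and "j0 \<ge> 2"
    and "t j0 > thi" and "thi > t (j0 - 1)"
  shows "\<forall>x\<in>{tlo..thi}. q x > p x"
proof
  fix x assume x: "x \<in> {tlo..thi}"
  have inj: "inj_on p I"
    using assms(7) strict_mono_on_imp_inj_on by blast
  have step: "t (Suc j) \<in> I \<and> p (t (Suc j)) = q (t j)" if "1 \<le> j" "j < j0" for j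
    using assms(9) that the_inv_into_into[OF inj] f_the_inv_into_f[OF inj] by auto
  have t_in_I: "t j \<in> I" if "1 \<le> j" "j < j0" for j
    using that step[of "j - 1"] assms(1,4,8)
    by (cases "j = 1") (auto simp: Suc_diff_1)
  obtain j where j: "1 \<le> j" "j < j0" "t j \<le> x" "x < t (Suc j)"
    using ex_index_between_consecutive[of 1 j0 t x] assms(8,11,12) x by auto
  have x_in_I: "x \<in> I"
    using x assms(4) by blast
  have "p x < p (t (Suc j))"
    using strict_mono_onD[OF assms(7) x_in_I] step[OF j(1,2)] j(4) by blast
  also have "\<dots> = q (t j)"
    using step[OF j(1,2)] by simp
  also have "\<dots> \<le> q x"
    using mono_onD[OF assms(5) t_in_I[OF j(1,2)] x_in_I j(3)] .
  finally show "q x > p x" .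
qed

end
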